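(* Let $k\ge3$ be fixed and let $N$ be a sufficiently large positive integer (in terms of $k$). Put $\varepsilon=1/(\lfloor N^{1/(2k+1)}\rfloor-1)$, $\kappa=\lfloor1/\varepsilon\rfloor+1$, and $V(k)=\max\{\frac{\kappa^{2k-2}}{2}(\varepsilon-\frac1\kappa)^{-1},\kappa^{k-1}+\varepsilon\}$. Let $0=n_0<n_1<\cdots<n_k\le N$ be integers with $n_k\ge V(k)$, and let $F(x)=\sum_{j=0}^k x^{n_j}$. Let $d$ be an integer with $\frac{n_k}{\kappa^{k-1}+\varepsilon}<d<\frac{n_k}{1-\varepsilon}$ such that for each $j\in\{1,\ldots,k\}$ we can write $n_j=m_jd+t_j$ with integers $m_j,t_j$ and $|t_j|<\varepsilon d$; put $m_0=t_0=0$. If $g(x)$ is an irreducible reciprocal factor of $F(x)$ in $\mathbb{Z}[x]$, then either $$\deg g< 9N^{2k/(2k+1)},$$ or there exist four distinct indices $i,j,u,v\in\{0,1,\ldots,k\}$ such that $$\begin{vmatrix} n_i-n_j & m_i-m_j\\ n_u-n_v & m_u-m_v\end{vmatrix}=0.$$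
   Context: For nonzero $f(x)\in\mathbb{R}[x]$, $\tilde f(x)=x^{\deg f}f(1/x)$; $f$ is reciprocal if $f=\pm\tilde f$. (Such a $d$ exists by the preceding lemma on simultaneous approximation: for $n_k\ge V(k)$ there is an integer $d$ in that interval with each $n_j\bmod d\in[0,\varepsilon d)\cup((1-\varepsilon)d,d)$.) *)

theory Defs
  imports "HOL-Computational_Algebra.Polynomial" Complex_Main
begin

text \<open>Tilde f = x^(deg f) f(1/x) is the library's reflect_poly.
  f is reciprocal iff f = tilde f or f = - tilde f.\<close>
definition reciprocal :: "int poly \<Rightarrow> bool" where
  "reciprocal f \<longleftrightarrow> f \<noteq> 0 \<and> (f = reflect_poly f \<or> f = - reflect_poly f)"

definition eps_N :: "nat \<Rightarrow> nat \<Rightarrow> real" where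
  "eps_N k N = 1 / (real_of_int \<lfloor>real N powr (1 / real (2*k+1))\<rfloor> - 1)"

definition kappa_N :: "nat \<Rightarrow> nat \<Rightarrow> int" where
  "kappa_N k N = \<lfloor>1 / eps_N k N\<rfloor> + 1"

definition V_N :: "nat \<Rightarrow> nat \<Rightarrow> real" where
  "V_N k N = max ((real_of_int (kappa_N k N)) ^ (2*k-2) / 2 * inverse (eps_N k N - 1 / real_of_int (kappa_N k N)))
                 ((real_of_int (kappa_N k N)) ^ (k-1) + eps_N k N)"

definition F_poly :: "nat \<Rightarrow> (nat \<Rightarrow> nat) \<Rightarrow> int poly" where
  "F_poly k n = (\<Sum>j\<le>k. monom 1 (n j))"

end

(*
  Write n_j = m_j d + t_j with |t_j| <= T and consider the bivariate polynomials
  G(x, y) = sum_j x^(t_j + T) y^(m_j) and G'(x, y) = sum_j x^(T - t_j) y^(m_k - m_j),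
  for which G(x, x^d) = x^T F(x) and G'(x, x^d) = x^(T - t_k) F~(x).  A reciprocal factor g of F
  divides both, hence divides their resultant R(x) with respect to y.  If R is nonzero, then
  deg g <= deg R <= 4 m_k T, and this is below 9 N^(2k/(2k+1)) for the given choice of epsilon.
  If R = 0, then G and G' have a common factor of positive y-degree.  Its Newton polygon has an
  edge, so the Newton polygons of G and G' have edges with the same outer normal w.  Since the
  support of G' is the point reflection of that of G, the linear form w . (t_j, m_j) attains
  its maximum at two indices and its minimum at two indices (if the two extremes agree, any
  four indices will do).  For two such pairs the vectors (t_i - t_j, m_i - m_j) are both
  orthogonal to w, so their determinant vanishes, and so does the one with n_i - n_j in place
  of t_i - t_j, as the two differ by d (m_i - m_j).
*)

theory Submission
  imports Defs "Subresultants.Subresultant_Gcd" "HOL-Library.Product_Plus" "HOL-Library.Product_Lexorder"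
begin

lemma ex_argmax_finite:
  fixes f :: "'a \<Rightarrow> 'b::linorder"
  assumes "finite S" "S \<noteq> {}"
  obtains x where "x \<in> S" "\<And>y. y \<in> S \<Longrightarrow> f y \<le> f x"
proof -
  have "Max (f ` S) \<in> f ` S" using assms by simp
  then obtain x where "x \<in> S" "f x = Max (f ` S)" by auto
  with assms that show thesis by simp
qed

text \<open>Pairs of integers are ordered lexicographically.\<close>

lemma lex_add_eq_imp_eq:
  fixes a b a' b' :: "int \<times> int"
  assumes "a \<le> a'" "b \<le> b'" "a + b = a' + b'"
  shows "a = a'"
  using assms by (auto simp: less_eq_prod_def prod_eq_iff)

section \<open>Supports of bivariate polynomials\<close>

text \<open>A bivariate polynomial is an \<open>'a poly poly\<close>, a polynomial in \<open>y\<close> with coefficients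
  in \<open>'a[x]\<close>; \<open>coeff2 P (a, b)\<close> is the coefficient of \<open>x\<^sup>a y\<^sup>b\<close>.\<close>

definition coeff2 :: "'a::zero poly poly \<Rightarrow> nat \<times> nat \<Rightarrow> 'a" where
  "coeff2 P z = coeff (coeff P (snd z)) (fst z)"

definition supp2 :: "'a::zero poly poly \<Rightarrow> (nat \<times> nat) set" where
  "supp2 P = {z. coeff2 P z \<noteq> 0}"

definition wdot :: "int \<times> int \<Rightarrow> nat \<times> nat \<Rightarrow> int" where
  "wdot w z = fst w * int (fst z) + snd w * int (snd z)"

lemma wdot_add [simp]: "wdot w (x + y) = wdot w x + wdot w y"
  by (simp add: wdot_def algebra_simps)

lemma wdot_pair_inj:
  assumes "fst w * snd e \<noteq> snd w * fst e"
  shows "inj (\<lambda>z. (wdot w z, wdot e z))"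
proof (rule injI)
  fix x y assume xy: "(wdot w x, wdot e x) = (wdot w y, wdot e y)"
  define a b where "a = int (fst x) - int (fst y)" and "b = int (snd x) - int (snd y)"
  have "wdot v x - wdot v y = fst v * a + snd v * b" for v
    by (simp add: wdot_def a_def b_def algebra_simps)
  with xy have "fst w * a + snd w * b = 0" "fst e * a + snd e * b = 0"
    by (metis prod.inject right_minus_eq)+
  moreover have "(fst w * snd e - snd w * fst e) * a
      = snd e * (fst w * a + snd w * b) - snd w * (fst e * a + snd e * b)"
    "(fst w * snd e - snd w * fst e) * b
      = fst w * (fst e * a + snd e * b) - fst e * (fst w * a + snd w * b)"
    by (simp_all add: algebra_simps)
  ultimately have "(fst w * snd e - snd w * fst e) * a = 0" "(fst w * snd e - snd w * fst e) * b = 0"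
    by simp_all
  with assms show "x = y" by (simp add: a_def b_def prod_eq_iff)
qed

lemma supp2_0 [simp]: "supp2 0 = {}"
  by (simp add: supp2_def coeff2_def)

lemma lead_coeff2_in_supp2:
  "P \<noteq> 0 \<Longrightarrow> (degree (lead_coeff P), degree P) \<in> supp2 P"
  by (simp add: supp2_def coeff2_def)

lemma coeff_in_supp2:
  "coeff P b \<noteq> 0 \<Longrightarrow> (degree (coeff P b), b) \<in> supp2 P"
  by (simp add: supp2_def coeff2_def)

lemma supp2_subset: "supp2 P \<subseteq> (\<Union>b\<le>degree P. {..degree (coeff P b)} \<times> {b})"
proof
  fix z assume "z \<in> supp2 P"
  then have "coeff (coeff P (snd z)) (fst z) \<noteq> 0" by (simp add: supp2_def coeff2_def)
  then have "snd z \<le> degree P" "fst z \<le> degree (coeff P (snd z))"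
    by (auto intro: le_degree)
  then show "z \<in> (\<Union>b\<le>degree P. {..degree (coeff P b)} \<times> {b})" by (cases z) auto
qed

lemma finite_supp2: "finite (supp2 P)"
  by (rule finite_subset[OF supp2_subset]) auto

lemma snd_le_degree_if_in_supp2: "z \<in> supp2 P \<Longrightarrow> snd z \<le> degree P"
  using supp2_subset by fastforce

lemma degree_le_supp2:
  assumes "\<And>z. z \<in> supp2 P \<Longrightarrow> snd z \<le> M"
  shows "degree P \<le> M"
  using assms coeff_in_supp2 by (fastforce intro: degree_le)

lemma degree_coeff_le_supp2:
  assumes "\<And>z. z \<in> supp2 P \<Longrightarrow> fst z \<le> D"
  shows "degree (coeff P b) \<le> D"
  using assms coeff_in_supp2[of P b] by (cases "coeff P b = 0") auto

lemma coeff2_mult: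
  "coeff2 (P * Q) z = (\<Sum>x\<in>{..fst z} \<times> {..snd z}. coeff2 P x * coeff2 Q (z - x))"
proof -
  have "coeff2 (P * Q) z =
      (\<Sum>b\<le>snd z. \<Sum>a\<le>fst z. coeff2 P (a, b) * coeff2 Q (fst z - a, snd z - b))"
    by (simp add: coeff2_def coeff_mult coeff_sum)
  also have "\<dots> = (\<Sum>a\<le>fst z. \<Sum>b\<le>snd z. coeff2 P (a, b) * coeff2 Q (fst z - a, snd z - b))"
    by (rule sum.swap)
  finally show ?thesis by (simp add: sum.cartesian_product case_prod_unfold minus_prod_def)
qed

lemma supp2_mult_subset:
  assumes "z \<in> supp2 (P * Q)"
  obtains x y where "x \<in> supp2 P" "y \<in> supp2 Q" "z = x + y"
proof -
  from assms obtain x where x: "x \<in> {..fst z} \<times> {..snd z}" "coeff2 P x * coeff2 Q (z - x) \<noteq> 0"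
    unfolding supp2_def coeff2_mult by (auto elim: sum.not_neutral_contains_not_neutral)
  then have "x \<in> supp2 P" "z - x \<in> supp2 Q" "z = x + (z - x)"
    by (auto simp: supp2_def prod_eq_iff)
  then show thesis by (rule that)
qed

lemma coeff2_mult_unique_decomposition:
  assumes "\<And>x y. x \<in> supp2 P \<Longrightarrow> y \<in> supp2 Q \<Longrightarrow> x + y = x1 + y1 \<Longrightarrow> x = x1"
  shows "coeff2 (P * Q) (x1 + y1) = coeff2 P x1 * coeff2 Q y1"
proof -
  have "coeff2 P x * coeff2 Q (x1 + y1 - x) = 0"
    if "x \<in> {..fst (x1 + y1)} \<times> {..snd (x1 + y1)}" "x \<noteq> x1" for x
  proof (rule ccontr)
    assume "coeff2 P x * coeff2 Q (x1 + y1 - x) \<noteq> 0"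
    then have "x \<in> supp2 P" "x1 + y1 - x \<in> supp2 Q" by (auto simp: supp2_def)
    moreover have "x + (x1 + y1 - x) = x1 + y1" using that(1) by (auto simp: prod_eq_iff)
    ultimately show False using assms that(2) by blast
  qed
  then show ?thesis
    unfolding coeff2_mult by (subst sum.remove[of _ x1]) (auto simp: mem_Times_iff intro: sum.neutral)
qed

lemma argmax_add_in_supp2:
  fixes P Q :: "'a::idom poly poly" and L :: "nat \<times> nat \<Rightarrow> int \<times> int"
  assumes L_add: "\<And>x y. L (x + y) = L x + L y" and L_inj: "inj L"
    and x1: "x1 \<in> supp2 P" "\<And>x. x \<in> supp2 P \<Longrightarrow> L x \<le> L x1"
    and y1: "y1 \<in> supp2 Q" "\<And>y. y \<in> supp2 Q \<Longrightarrow> L y \<le> L y1"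
  shows "x1 + y1 \<in> supp2 (P * Q)"
proof -
  have "x = x1" if "x \<in> supp2 P" "y \<in> supp2 Q" "x + y = x1 + y1" for x y
  proof -
    have "L x + L y = L x1 + L y1" using L_add that(3) by metis
    then have "L x = L x1" using x1(2) y1(2) that by (blast intro: lex_add_eq_imp_eq)
    with L_inj show ?thesis by (rule injD)
  qed
  then have "coeff2 (P * Q) (x1 + y1) = coeff2 P x1 * coeff2 Q y1"
    by (rule coeff2_mult_unique_decomposition)
  with x1(1) y1(1) show ?thesis by (simp add: supp2_def)
qed

definition monom_sum2 :: "'b set \<Rightarrow> ('b \<Rightarrow> nat \<times> nat) \<Rightarrow> int poly poly" where
  "monom_sum2 J p = (\<Sum>j\<in>J. monom (monom 1 (fst (p j))) (snd (p j)))"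

lemma supp2_monom_sum2:
  assumes "finite J"
  shows "supp2 (monom_sum2 J p) = p ` J"
proof -
  have "coeff2 (monom_sum2 J p) z = (\<Sum>j\<in>J. if p j = z then 1 else 0)" for z
    by (auto simp: monom_sum2_def coeff2_def coeff_sum prod_eq_iff intro!: sum.cong)
  then show ?thesis
    using assms by (auto simp: supp2_def sum_nonneg_eq_0_iff) (metis image_eqI)
qed

lemma poly_monom_sum2:
  "poly (monom_sum2 J p) (monom 1 d) = (\<Sum>j\<in>J. monom 1 (fst (p j) + d * snd (p j)))"
  by (simp add: monom_sum2_def poly_sum poly_monom monom_power mult_monom mult.commute)

section \<open>Edges of Newton polygons\<close>

text \<open>\<open>edge_normal w S\<close>: \<open>w\<close> is an outer normal of an edge of the convex hull of \<open>S\<close>;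
  for \<open>S = supp2 P\<close> this is an edge of the Newton polygon of \<open>P\<close>.\<close>

definition edge_normal :: "int \<times> int \<Rightarrow> (nat \<times> nat) set \<Rightarrow> bool" where
  "edge_normal w S \<longleftrightarrow>
    (\<exists>x\<in>S. \<exists>y\<in>S. x \<noteq> y \<and> wdot w x = wdot w y \<and> (\<forall>z\<in>S. wdot w z \<le> wdot w x))"

lemma edge_normal_image:
  "edge_normal w (p ` I) \<longleftrightarrow>
    (\<exists>i\<in>I. \<exists>j\<in>I. p i \<noteq> p j \<and> wdot w (p i) = wdot w (p j) \<and>
      (\<forall>l\<in>I. wdot w (p l) \<le> wdot w (p i)))"
  by (auto simp: edge_normal_def)

lemma lex_argmax_add_in_supp2:
  fixes P Q :: "'a::idom poly poly"
  assumes "fst w * snd e \<noteq> snd w * fst e" "P \<noteq> 0" "Q \<noteq> 0"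
  obtains x y where "x + y \<in> supp2 (P * Q)"
    "x \<in> supp2 P" "\<And>x'. x' \<in> supp2 P \<Longrightarrow> (wdot w x', wdot e x') \<le> (wdot w x, wdot e x)"
    "y \<in> supp2 Q" "\<And>y'. y' \<in> supp2 Q \<Longrightarrow> (wdot w y', wdot e y') \<le> (wdot w y, wdot e y)"
proof -
  let ?L = "\<lambda>z. (wdot w z, wdot e z)"
  obtain x where x: "x \<in> supp2 P" "\<And>x'. x' \<in> supp2 P \<Longrightarrow> ?L x' \<le> ?L x"
    by (rule ex_argmax_finite[of "supp2 P" ?L]) (use finite_supp2 lead_coeff2_in_supp2[OF \<open>P \<noteq> 0\<close>] in auto)
  obtain y where y: "y \<in> supp2 Q" "\<And>y'. y' \<in> supp2 Q \<Longrightarrow> ?L y' \<le> ?L y"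
    by (rule ex_argmax_finite[of "supp2 Q" ?L]) (use finite_supp2 lead_coeff2_in_supp2[OF \<open>Q \<noteq> 0\<close>] in auto)
  have "x + y \<in> supp2 (P * Q)"
    by (rule argmax_add_in_supp2[OF _ wdot_pair_inj[OF assms(1)] x y]) simp
  with x y that show thesis by blast
qed

text \<open>For \<open>e\<close> perpendicular to \<open>w\<close>, the lexicographic maxima of \<open>(w, e)\<close> and of
  \<open>(w, -e)\<close> on the two supports add up to two points of the top edge of the product; they
  differ because the top edge of \<open>P\<close> is not a single point.\<close>

lemma edge_normal_mult:
  fixes P Q :: "'a::idom poly poly"
  assumes w: "w \<noteq> 0" and P: "edge_normal w (supp2 P)" and Q: "Q \<noteq> 0"
  shows "edge_normal w (supp2 (P * Q))"
proof -
  from P obtain p q where pq: "p \<in> supp2 P" "q \<in> supp2 P" "p \<noteq> q" "wdot w p = wdot w q"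
    "\<And>z. z \<in> supp2 P \<Longrightarrow> wdot w z \<le> wdot w p"
    unfolding edge_normal_def by blast
  have "P \<noteq> 0" using pq(1) by (auto simp: supp2_def coeff2_def)
  define e where "e = (- snd w, fst w)"
  define e' where "e' = (snd w, - fst w)"
  have wdot_e': "wdot e' z = - wdot e z" for z by (simp add: wdot_def e_def e'_def)
  have "0 < fst w * fst w + snd w * snd w"
    using w by (simp add: sum_squares_gt_zero_iff prod_eq_iff)
  then have det: "fst w * snd e \<noteq> snd w * fst e" "fst w * snd e' \<noteq> snd w * fst e'"
    by (auto simp: e_def e'_def)
  obtain x1 y1 where z1: "x1 + y1 \<in> supp2 (P * Q)"
    and x1: "x1 \<in> supp2 P" "\<And>x'. x' \<in> supp2 P \<Longrightarrow> (wdot w x', wdot e x') \<le> (wdot w x1, wdot e x1)"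
    and y1: "y1 \<in> supp2 Q" "\<And>y'. y' \<in> supp2 Q \<Longrightarrow> (wdot w y', wdot e y') \<le> (wdot w y1, wdot e y1)"
    using lex_argmax_add_in_supp2[OF det(1) \<open>P \<noteq> 0\<close> Q] by blast
  obtain x0 y0 where z0: "x0 + y0 \<in> supp2 (P * Q)"
    and x0: "x0 \<in> supp2 P" "\<And>x'. x' \<in> supp2 P \<Longrightarrow> (wdot w x', wdot e' x') \<le> (wdot w x0, wdot e' x0)"
    and y0: "y0 \<in> supp2 Q" "\<And>y'. y' \<in> supp2 Q \<Longrightarrow> (wdot w y', wdot e' y') \<le> (wdot w y0, wdot e' y0)"
    using lex_argmax_add_in_supp2[OF det(2) \<open>P \<noteq> 0\<close> Q] by blast
  have "wdot w p \<le> wdot w x1" "wdot w p \<le> wdot w x0"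
    using x1(2)[OF pq(1)] x0(2)[OF pq(1)] by (auto simp: less_eq_prod_def)
  then have wx: "wdot w x1 = wdot w p" "wdot w x0 = wdot w p"
    using pq(5)[OF x1(1)] pq(5)[OF x0(1)] by simp_all
  have y_max: "wdot w y \<le> wdot w y1" if "y \<in> supp2 Q" for y
    using y1(2)[OF that] by (auto simp: less_eq_prod_def)
  have wy: "wdot w y0 = wdot w y1"
    using y_max[OF y0(1)] y0(2)[OF y1(1)] by (auto simp: less_eq_prod_def)
  have "wdot e p \<noteq> wdot e q"
    using pq(3,4) injD[OF wdot_pair_inj[OF det(1)], of p q] by auto
  moreover have "wdot e p \<le> wdot e x1" "wdot e q \<le> wdot e x1"
    using x1(2)[OF pq(1)] x1(2)[OF pq(2)] wx pq(4) by (simp_all add: less_eq_prod_def)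
  moreover have "wdot e x0 \<le> wdot e p" "wdot e x0 \<le> wdot e q"
    using x0(2)[OF pq(1)] x0(2)[OF pq(2)] wx pq(4) by (simp_all add: less_eq_prod_def wdot_e')
  ultimately have "wdot e x0 < wdot e x1" by linarith
  moreover have "wdot e y0 \<le> wdot e y1" using y1(2)[OF y0(1)] wy by (simp add: less_eq_prod_def)
  ultimately have "wdot e (x0 + y0) < wdot e (x1 + y1)" by simp
  then have "x1 + y1 \<noteq> x0 + y0" by (metis less_irrefl)
  moreover have "wdot w z \<le> wdot w (x1 + y1)" if "z \<in> supp2 (P * Q)" for z
    using that by (elim supp2_mult_subset) (use pq(5) y_max wx in \<open>simp add: add_mono\<close>)
  moreover have "wdot w (x1 + y1) = wdot w (x0 + y0)" using wx wy by simp
  ultimately show ?thesis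
    unfolding edge_normal_def using z0 z1 by blast
qed

lemma edge_normal_exists:
  assumes "finite S" "p \<in> S" "q \<in> S" "p \<noteq> q"
  shows "\<exists>w. w \<noteq> 0 \<and> edge_normal w S"
proof -
  txt \<open>Take a point \<open>p0\<close> of largest abscissa: either it lies on a vertical edge, or the
    segment from \<open>p0\<close> of largest slope is an edge.\<close>
  obtain p0 where p0: "p0 \<in> S" "\<And>r. r \<in> S \<Longrightarrow> fst r \<le> fst p0"
    by (rule ex_argmax_finite[of S fst]) (use assms in auto)
  show ?thesis
  proof (cases "\<exists>r\<in>S. r \<noteq> p0 \<and> fst r = fst p0")
    case True
    then obtain r where r: "r \<in> S" "r \<noteq> p0" "fst r = fst p0" by blast
    with p0 have "edge_normal (1, 0) S"
      unfolding edge_normal_def wdot_def by (intro bexI[OF _ p0(1)] bexI[OF _ r(1)]) auto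
    then show ?thesis by (intro exI[of _ "(1, 0)"]) (simp add: zero_prod_def)
  next
    case False
    with p0 have lt: "fst r < fst p0" if "r \<in> S - {p0}" for r
      using that by (metis DiffE insertI1 le_neq_implies_less)
    define slope :: "nat \<times> nat \<Rightarrow> real" where
      "slope r = (real (snd r) - real (snd p0)) / (real (fst p0) - real (fst r))" for r
    obtain q0 where q0: "q0 \<in> S - {p0}" "\<And>r. r \<in> S - {p0} \<Longrightarrow> slope r \<le> slope q0"
      by (rule ex_argmax_finite[of "S - {p0}" slope]) (use assms in blast)+
    define w where "w = (int (snd q0) - int (snd p0), int (fst p0) - int (fst q0))"
    have "wdot w r \<le> wdot w p0" if "r \<in> S" for r
    proof (cases "r = p0")
      case False
      with that have r: "r \<in> S - {p0}" by simp
      have "real_of_int ((int (snd r) - int (snd p0)) * (int (fst p0) - int (fst q0)))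
          \<le> real_of_int ((int (snd q0) - int (snd p0)) * (int (fst p0) - int (fst r)))"
        using q0(2)[OF r] lt[OF r] lt[OF q0(1)] by (simp add: slope_def divide_simps)
      moreover have "wdot w r - wdot w p0 =
          (int (snd r) - int (snd p0)) * (int (fst p0) - int (fst q0))
          - (int (snd q0) - int (snd p0)) * (int (fst p0) - int (fst r))"
        by (simp add: wdot_def w_def algebra_simps)
      ultimately show ?thesis unfolding of_int_le_iff by linarith
    qed simp
    moreover have "wdot w q0 = wdot w p0" by (simp add: wdot_def w_def algebra_simps)
    moreover have "w \<noteq> 0" using lt[OF q0(1)] by (simp add: w_def zero_prod_def)
    moreover have "q0 \<in> S" "q0 \<noteq> p0" using q0(1) by auto
    ultimately show ?thesis
      unfolding edge_normal_def by (intro exI[of _ w] conjI bexI[OF _ p0(1)] bexI[of _ q0]) auto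
  qed
qed

lemma common_factor_edge_normal:
  fixes H P Q :: "'a::idom poly poly"
  assumes "H dvd P" "H dvd Q" "coeff P 0 \<noteq> 0" "Q \<noteq> 0" "degree H \<noteq> 0"
  shows "\<exists>w. w \<noteq> 0 \<and> edge_normal w (supp2 P) \<and> edge_normal w (supp2 Q)"
proof -
  obtain K where P: "P = H * K" using assms(1) by (rule dvdE)
  obtain L where Q: "Q = H * L" using assms(2) by (rule dvdE)
  have "coeff H 0 \<noteq> 0" "K \<noteq> 0" using assms(3) unfolding P coeff_mult_0 by auto
  have "L \<noteq> 0" using assms(4) Q by auto
  have "(degree (coeff H 0), 0) \<in> supp2 H" "(degree (lead_coeff H), degree H) \<in> supp2 H"
    using \<open>coeff H 0 \<noteq> 0\<close> by (auto intro: coeff_in_supp2)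
  then obtain w where "w \<noteq> 0" "edge_normal w (supp2 H)"
    using edge_normal_exists[OF finite_supp2] assms(5) by (metis prod.inject)
  then show ?thesis
    using edge_normal_mult[of w H] \<open>K \<noteq> 0\<close> \<open>L \<noteq> 0\<close> unfolding P Q by blast
qed

section \<open>Resultants over polynomial rings\<close>

text \<open>Expanding the determinant along its last row, whose entries are monomial multiples of
  \<open>f\<close> and \<open>g\<close>, writes the resultant as a combination of \<open>f\<close> and \<open>g\<close>.\<close>

lemma resultant_bezout:
  fixes f g :: "'a::comm_ring_1 poly"
  assumes "0 < degree f + degree g"
  shows "\<exists>p q. [:resultant f g:] = p * f + q * g"
proof -
  define n where "n = degree f + degree g"
  define A where "A = subresultant_mat 0 f g"
  define c where "c j = cofactor A (n - 1) j" for j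
  define a where "a j = (if j < degree g then monom 1 (degree g - 1 - j) * c j else 0)" for j
  define b where "b j = (if j < degree g then 0 else monom 1 (degree f - 1 - (j - degree g)) * c j)" for j
  have A: "A \<in> carrier_mat n n" unfolding A_def n_def carrier_mat_def by simp
  have n: "n - 1 < n" using assms n_def by simp
  have "[:resultant f g:] = det A" unfolding A_def subresultant_resultant[symmetric] subresultant_def ..
  also have "\<dots> = (\<Sum>j<n. A $$ (n - 1, j) * c j)" unfolding c_def by (rule laplace_expansion_row[OF A n])
  also have "\<dots> = (\<Sum>j<n. a j * f + b j * g)"
  proof (rule sum.cong[OF refl])
    fix j assume "j \<in> {..<n}"
    then have j: "j < n" by simp
    have "A $$ (n - 1, j) = (if j < degree g then monom 1 (degree g - 1 - j) * f
        else monom 1 (degree f - 1 - (j - degree g)) * g)"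
      unfolding A_def using subresultant_index_mat[where J = 0 and F = f and G = g and i = "n - 1" and j = j] j n
      unfolding n_def by (simp add: Let_def)
    then show "A $$ (n - 1, j) * c j = a j * f + b j * g"
      unfolding a_def b_def by (simp add: ac_simps)
  qed
  also have "\<dots> = sum a {..<n} * f + sum b {..<n} * g"
    unfolding sum.distrib sum_distrib_right ..
  finally show ?thesis by blast
qed

lemma degree_resultant_le:
  fixes f g :: "'a::idom poly poly"
  assumes Df: "\<And>i. degree (coeff f i) \<le> D" and Dg: "\<And>i. degree (coeff g i) \<le> D"
  shows "degree (resultant f g) \<le> (degree f + degree g) * D"
proof -
  define n where "n = degree f + degree g"
  define A where "A = sylvester_mat f g"
  have A: "A \<in> carrier_mat n n" unfolding A_def n_def by (rule sylvester_carrier_mat)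
  have ent: "degree (A $$ (i,j)) \<le> D" if "i < n" "j < n" for i j
    using that Df Dg unfolding A_def n_def by (auto simp: sylvester_index_mat)
  have "resultant f g = det A" unfolding resultant_def A_def ..
  also have "\<dots> = (\<Sum>p | p permutes {0..<n}. of_int (sign p) * (\<Prod>i = 0..<n. A $$ (i, p i)))"
    by (rule det_def'[OF A])
  finally have eq: "resultant f g = \<dots>" .
  have "degree (\<Sum>p | p permutes {0..<n}. of_int (sign p) * (\<Prod>i = 0..<n. A $$ (i, p i))) \<le> n * D"
  proof (rule degree_sum_le)
    show "finite {p. p permutes {0..<n}}" by (simp add: finite_permutations)
    fix p assume "p \<in> {p. p permutes {0..<n}}"
    then have p: "p permutes {0..<n}" by simp
    have pi: "p i < n" if "i < n" for i using p that by (simp add: permutes_in_image)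
    have "degree (of_int (sign p) * (\<Prod>i = 0..<n. A $$ (i, p i)))
        \<le> degree (of_int (sign p) :: 'a poly) + degree (\<Prod>i = 0..<n. A $$ (i, p i))"
      by (rule degree_mult_le)
    also have "degree (of_int (sign p) :: 'a poly) = 0" by (rule degree_of_int)
    also have "degree (\<Prod>i = 0..<n. A $$ (i, p i)) \<le> (\<Sum>i = 0..<n. degree (A $$ (i, p i)))"
      using degree_prod_sum_le[of "{0..<n}" "\<lambda>i. A $$ (i, p i)"] by (simp add: o_def)
    also have "\<dots> \<le> (\<Sum>i = 0..<n. D)" by (rule sum_mono) (simp add: ent pi)
    finally show "degree (of_int (sign p) * (\<Prod>i = 0..<n. A $$ (i, p i))) \<le> n * D" by simp
  qed
  then show ?thesis unfolding eq n_def .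
qed

lemma dvd_resultant_if_dvd_poly:
  fixes f g :: "'a::comm_ring_1 poly poly"
  assumes "degree f + degree g > 0" "h dvd poly f x" "h dvd poly g x"
  shows "h dvd resultant f g"
proof -
  obtain p q where "[:resultant f g:] = p * f + q * g"
    using resultant_bezout[OF assms(1)] by blast
  then have "poly [:resultant f g:] x = poly (p * f + q * g) x" by (rule arg_cong)
  then have "resultant f g = poly p x * poly f x + poly q x * poly g x" by simp
  with assms(2,3) show ?thesis by simp
qed

section \<open>Reciprocal factors of lacunary polynomials\<close>

lemma reflect_poly_monom_sum:
  fixes e :: "'b \<Rightarrow> nat"
  assumes "finite J" "j0 \<in> J" "\<And>j. j \<in> J \<Longrightarrow> e j \<le> e j0"
  shows "reflect_poly (\<Sum>j\<in>J. monom (1::int) (e j)) = (\<Sum>j\<in>J. monom 1 (e j0 - e j))"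
proof -
  define f where "f = (\<Sum>j\<in>J. monom (1::int) (e j))"
  have coeff_f: "coeff f i = (\<Sum>j\<in>J. if e j = i then 1 else 0)" for i
    by (simp add: f_def coeff_sum)
  have "coeff f (e j0) \<noteq> 0" using assms(1,2) by (auto simp: coeff_f sum_nonneg_eq_0_iff)
  moreover have "degree f \<le> e j0"
    unfolding f_def by (rule degree_sum_le) (use assms in \<open>auto simp: degree_monom_eq\<close>)
  ultimately have deg: "degree f = e j0" by (simp add: antisym le_degree)
  show ?thesis unfolding f_def[symmetric]
  proof (rule poly_eqI)
    fix i
    have "(\<Sum>j\<in>J. if e j = e j0 - i then 1 else 0) = (\<Sum>j\<in>J. if e j0 - e j = i then 1 else (0::int))"
      if "i \<le> e j0" using assms(3) that by (intro sum.cong) auto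
    then show "coeff (reflect_poly f) i = coeff (\<Sum>j\<in>J. monom 1 (e j0 - e j)) i"
      by (auto simp: coeff_reflect_poly deg coeff_f coeff_sum intro!: sum.neutral)
  qed
qed

lemma reciprocal_dvd_reflect_poly:
  assumes "reciprocal g" "g dvd f"
  shows "g dvd reflect_poly f"
proof -
  from assms(2) have "reflect_poly g dvd reflect_poly f"
    by (metis dvdE dvdI reflect_poly_mult)
  moreover have "g dvd reflect_poly g"
    using assms(1) unfolding reciprocal_def by (metis dvd_refl dvd_minus_iff)
  ultimately show ?thesis by (rule dvd_trans[rotated])
qed

lemma det2_eq_0_if_common_kernel:
  fixes w1 w2 x y x' y' :: "'a::idom"
  assumes "w1 \<noteq> 0 \<or> w2 \<noteq> 0" "w1 * x + w2 * y = 0" "w1 * x' + w2 * y' = 0"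
  shows "x * y' - x' * y = 0"
proof -
  have "w1 * (x * y' - x' * y) = y' * (w1 * x + w2 * y) - y * (w1 * x' + w2 * y')"
    "w2 * (x * y' - x' * y) = x * (w1 * x' + w2 * y') - x' * (w1 * x + w2 * y)"
    by (simp_all add: algebra_simps)
  with assms show ?thesis by auto
qed

lemma distinct_level_pairs:
  fixes W :: "nat \<Rightarrow> 'a::linorder"
  assumes "3 \<le> k" "i \<le> k" "j \<le> k" "u \<le> k" "v \<le> k" "i \<noteq> j" "u \<noteq> v"
    "W i = W j" "W u = W v" "\<And>l. l \<le> k \<Longrightarrow> W l \<le> W i" "\<And>l. l \<le> k \<Longrightarrow> W u \<le> W l"
  shows "\<exists>a\<le>k. \<exists>b\<le>k. \<exists>c\<le>k. \<exists>e\<le>k. distinct [a, b, c, e] \<and> W a = W b \<and> W c = W e"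
proof (cases "W i = W u")
  case True
  then have "W l = W i" if "l \<le> k" for l using assms(10,11)[OF that] by simp
  then have "W 0 = W 1" "W 2 = W 3" using assms(1) by simp_all
  moreover have "distinct [0, 1, 2, 3 :: nat]" "(0::nat) \<le> k" "(1::nat) \<le> k" "(2::nat) \<le> k"
    using assms(1) by simp_all
  ultimately show ?thesis using assms(1) by blast
next
  case False
  then have "W i \<noteq> W v" "W j \<noteq> W u" "W j \<noteq> W v" using assms(8,9) by simp_all
  then have "distinct [i, j, u, v]" using assms(6,7) False by auto
  then show ?thesis using assms(2-5,8,9) by blast
qed

locale exponent_split =
  fixes k :: nat and n :: "nat \<Rightarrow> nat" and m t :: "nat \<Rightarrow> int" and d T :: int
  assumes d_pos: "0 < d"
    and n_eq: "\<And>j. j \<le> k \<Longrightarrow> int (n j) = m j * d + t j"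
    and t_bound: "\<And>j. j \<le> k \<Longrightarrow> \<bar>t j\<bar> \<le> T"
    and m_nonneg: "\<And>j. j \<le> k \<Longrightarrow> 0 \<le> m j"
    and m_le: "\<And>j. j \<le> k \<Longrightarrow> m j \<le> m k"
    and n_le: "\<And>j. j \<le> k \<Longrightarrow> n j \<le> n k"
    and m_0: "m 0 = 0"
    and m_k_pos: "0 < m k"
begin

definition pt :: "nat \<Rightarrow> nat \<times> nat" where
  "pt j = (nat (t j + T), nat (m j))"

definition pt' :: "nat \<Rightarrow> nat \<times> nat" where
  "pt' j = (nat (T - t j), nat (m k - m j))"

definition G :: "int poly poly" where
  "G = monom_sum2 {..k} pt"

definition G' :: "int poly poly" where
  "G' = monom_sum2 {..k} pt'"

definition weight :: "int \<times> int \<Rightarrow> nat \<Rightarrow> int" where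
  "weight w j = fst w * t j + snd w * m j"

lemma shifts_nonneg: "j \<le> k \<Longrightarrow> 0 \<le> t j + T \<and> 0 \<le> T - t j"
  using t_bound[of j] by (simp add: abs_le_iff)

lemma supp2_G: "supp2 G = pt ` {..k}"
  by (simp add: G_def supp2_monom_sum2)

lemma supp2_G': "supp2 G' = pt' ` {..k}"
  by (simp add: G'_def supp2_monom_sum2)

lemma wdot_pt: "j \<le> k \<Longrightarrow> wdot w (pt j) = fst w * T + weight w j"
  using shifts_nonneg[of j] m_nonneg[of j] by (simp add: wdot_def pt_def weight_def algebra_simps)

lemma wdot_pt': "j \<le> k \<Longrightarrow> wdot w (pt' j) = fst w * T + snd w * m k - weight w j"
  using shifts_nonneg[of j] m_le[of j] by (simp add: wdot_def pt'_def weight_def algebra_simps)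

lemma poly_G: "poly G (monom 1 (nat d)) = monom 1 (nat T) * F_poly k n"
proof -
  have "fst (pt j) + nat d * snd (pt j) = nat T + n j" if "j \<le> k" for j
  proof -
    have "int (fst (pt j) + nat d * snd (pt j)) = int (nat T + n j)"
      using shifts_nonneg[OF that] m_nonneg[OF that] d_pos
      by (simp add: pt_def n_eq[OF that] algebra_simps)
    then show ?thesis by (simp only: of_nat_eq_iff)
  qed
  then show ?thesis
    by (simp add: G_def poly_monom_sum2 F_poly_def sum_distrib_left mult_monom)
qed

lemma poly_G': "poly G' (monom 1 (nat d)) = monom 1 (nat (T - t k)) * reflect_poly (F_poly k n)"
proof -
  have "fst (pt' j) + nat d * snd (pt' j) = nat (T - t k) + (n k - n j)" if "j \<le> k" for j
  proof -
    have "int (fst (pt' j) + nat d * snd (pt' j)) = int (nat (T - t k) + (n k - n j))"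
      using shifts_nonneg[OF that] shifts_nonneg[of k] m_le[OF that] d_pos n_le[OF that]
      by (simp add: pt'_def of_nat_diff n_eq[OF that] n_eq[of k] algebra_simps)
    then show ?thesis by (simp only: of_nat_eq_iff)
  qed
  moreover have "reflect_poly (F_poly k n) = (\<Sum>j\<le>k. monom 1 (n k - n j))"
    unfolding F_poly_def by (rule reflect_poly_monom_sum) (auto intro: n_le)
  ultimately show ?thesis
    by (simp add: G'_def poly_monom_sum2 sum_distrib_left mult_monom)
qed

lemma degree_G_pos: "0 < degree G"
  using snd_le_degree_if_in_supp2[of "pt k" G] m_k_pos by (simp add: supp2_G pt_def)

lemma degree_resultant_G: "degree (resultant G G') \<le> 4 * nat (m k) * nat T"
proof -
  have "degree G \<le> nat (m k)" "degree G' \<le> nat (m k)"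
    using m_le m_nonneg by (auto simp: supp2_G supp2_G' pt_def pt'_def intro!: degree_le_supp2 nat_mono)
  moreover have "degree (coeff G i) \<le> nat (2 * T)" "degree (coeff G' i) \<le> nat (2 * T)" for i
    using t_bound by (fastforce simp: supp2_G supp2_G' pt_def pt'_def abs_le_iff
        intro!: degree_coeff_le_supp2)+
  ultimately have "degree (resultant G G') \<le> (nat (m k) + nat (m k)) * nat (2 * T)"
    by (meson add_mono degree_resultant_le le_trans mult_le_mono1)
  also have "\<dots> = 4 * nat (m k) * nat T" by (simp add: nat_mult_distrib)
  finally show ?thesis .
qed

lemma degree_factor_le_if_resultant_nonzero:
  assumes "resultant G G' \<noteq> 0" "reciprocal g" "g dvd F_poly k n"
  shows "degree g \<le> 4 * nat (m k) * nat T"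
proof -
  have "g dvd poly G (monom 1 (nat d))" "g dvd poly G' (monom 1 (nat d))"
    unfolding poly_G poly_G' using assms(3) reciprocal_dvd_reflect_poly[OF assms(2,3)] by simp_all
  then have "g dvd resultant G G'"
    using dvd_resultant_if_dvd_poly degree_G_pos by (metis add_gr_0)
  then have "degree g \<le> degree (resultant G G')" using assms(1) by (rule dvd_imp_degree_le)
  with degree_resultant_G show ?thesis by linarith
qed

lemma edge_normals_if_resultant_zero:
  assumes "resultant G G' = 0"
  shows "\<exists>w. w \<noteq> 0 \<and> edge_normal w (supp2 G) \<and> edge_normal w (supp2 G')"
proof (rule common_factor_edge_normal)
  show "gcd G G' dvd G" "gcd G G' dvd G'" by simp_all
  show "degree (gcd G G') \<noteq> 0" using assms resultant_0_gcd by auto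
  have "pt 0 \<in> supp2 G" by (simp add: supp2_G)
  then show "coeff G 0 \<noteq> 0" by (auto simp: supp2_def coeff2_def pt_def m_0)
  have "supp2 G' \<noteq> {}" by (simp add: supp2_G')
  then show "G' \<noteq> 0" by auto
qed

lemma max_weight_pair:
  assumes "edge_normal w (supp2 G)"
  obtains i j where "i \<le> k" "j \<le> k" "i \<noteq> j" "weight w i = weight w j"
    "\<And>l. l \<le> k \<Longrightarrow> weight w l \<le> weight w i"
proof -
  from assms obtain i j where "i \<le> k" "j \<le> k" "pt i \<noteq> pt j" "wdot w (pt i) = wdot w (pt j)"
    "\<forall>l\<le>k. wdot w (pt l) \<le> wdot w (pt i)"
    unfolding supp2_G edge_normal_image by auto
  then show thesis by (intro that[of i j]) (auto simp: wdot_pt)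
qed

lemma min_weight_pair:
  assumes "edge_normal w (supp2 G')"
  obtains u v where "u \<le> k" "v \<le> k" "u \<noteq> v" "weight w u = weight w v"
    "\<And>l. l \<le> k \<Longrightarrow> weight w u \<le> weight w l"
proof -
  from assms obtain u v where "u \<le> k" "v \<le> k" "pt' u \<noteq> pt' v" "wdot w (pt' u) = wdot w (pt' v)"
    "\<forall>l\<le>k. wdot w (pt' l) \<le> wdot w (pt' u)"
    unfolding supp2_G' edge_normal_image by auto
  then show thesis by (intro that[of u v]) (auto simp: wdot_pt')
qed

lemma det_eq_0_if_weights_eq:
  assumes "w \<noteq> 0" "a \<le> k" "b \<le> k" "c \<le> k" "e \<le> k"
    "weight w a = weight w b" "weight w c = weight w e"
  shows "(int (n a) - int (n b)) * (m c - m e) - (int (n c) - int (n e)) * (m a - m b) = 0"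
proof -
  have "(t a - t b) * (m c - m e) - (t c - t e) * (m a - m b) = 0"
    by (rule det2_eq_0_if_common_kernel[of "fst w" "snd w"])
      (use assms in \<open>auto simp: weight_def prod_eq_iff algebra_simps\<close>)
  then show ?thesis using assms(2-5) by (simp add: n_eq algebra_simps)
qed

theorem factor_degree_le_or_det_eq_0:
  assumes "3 \<le> k" "reciprocal g" "g dvd F_poly k n"
  shows "degree g \<le> 4 * nat (m k) * nat T \<or>
    (\<exists>i\<le>k. \<exists>j\<le>k. \<exists>u\<le>k. \<exists>v\<le>k. distinct [i,j,u,v] \<and>
        (int (n i) - int (n j)) * (m u - m v) - (int (n u) - int (n v)) * (m i - m j) = 0)"
proof (cases "resultant G G' = 0")
  case True
  then obtain w where w: "w \<noteq> 0" "edge_normal w (supp2 G)" "edge_normal w (supp2 G')"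
    using edge_normals_if_resultant_zero by blast
  obtain i j where ij: "i \<le> k" "j \<le> k" "i \<noteq> j" "weight w i = weight w j"
    "\<And>l. l \<le> k \<Longrightarrow> weight w l \<le> weight w i"
    using max_weight_pair[OF w(2)] by blast
  obtain u v where uv: "u \<le> k" "v \<le> k" "u \<noteq> v" "weight w u = weight w v"
    "\<And>l. l \<le> k \<Longrightarrow> weight w u \<le> weight w l"
    using min_weight_pair[OF w(3)] by blast
  obtain a b c e where "a \<le> k" "b \<le> k" "c \<le> k" "e \<le> k" "distinct [a, b, c, e]"
    "weight w a = weight w b" "weight w c = weight w e"
    using distinct_level_pairs[OF assms(1) ij(1,2) uv(1,2) ij(3) uv(3) ij(4) uv(4) ij(5) uv(5)]
    by blast
  with det_eq_0_if_weights_eq[OF w(1)] show ?thesis by blast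
qed (use degree_factor_le_if_resultant_nonzero assms in blast)

end

section \<open>Numerical bounds\<close>

lemma quotient_le_if_le:
  fixes d m m' t t' :: int
  assumes "0 < d" "m * d + t \<le> m' * d + t'" "\<bar>t\<bar> + \<bar>t'\<bar> < d"
  shows "m \<le> m'"
proof -
  have "(m - m') * d < 1 * d" using assms(2,3) by (simp add: algebra_simps abs_less_iff)
  then have "m - m' < 1" using assms(1) by (simp only: mult_less_cancel_right)
  then show ?thesis by simp
qed

lemma le_powr_inverse_if_power_le:
  fixes c x :: real
  assumes "0 \<le> c" "0 < r" "c ^ r \<le> x"
  shows "c \<le> x powr (1 / real r)"
proof (cases "c = 0")
  case False
  then have "c = (c ^ r) powr (1 / real r)"
    using assms(1,2) by (simp add: powr_realpow[symmetric] powr_powr)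
  also have "\<dots> \<le> x powr (1 / real r)" using assms by (intro powr_mono2) auto
  finally show ?thesis .
qed simp

lemma product_le_if_approximation:
  fixes e D M T N :: real
  assumes "0 \<le> T" "T \<le> e * D" "0 \<le> M" "M * D \<le> N + T" "D * (1 - e) \<le> N" "0 < e" "e < 1"
  shows "M * T \<le> e / (1 - e) * N"
proof -
  have "M * T \<le> M * (e * D)" using assms(2,3) by (rule mult_left_mono)
  also have "\<dots> = e * (M * D)" by simp
  also have "\<dots> \<le> e * (N + e * D)" using assms(2,4,6) by (intro mult_left_mono) auto
  also have "\<dots> \<le> e * (N + e * (N / (1 - e)))"
    using assms(5-7) by (intro mult_left_mono add_left_mono) (auto simp: field_simps)
  also have "\<dots> = e / (1 - e) * N" using assms(7) by (simp add: field_simps)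
  finally show ?thesis .
qed

lemma eps_N_bounds:
  assumes "7 ^ (2*k+1) \<le> N"
  shows "0 < eps_N k N" "eps_N k N \<le> 1/6"
    "0 < N \<Longrightarrow> 4 * (eps_N k N / (1 - eps_N k N)) * real N < 9 * real N powr (real (2*k) / real (2*k+1))"
proof -
  define \<rho> where "\<rho> = real N powr (1 / real (2*k+1))"
  define L where "L = real_of_int \<lfloor>\<rho>\<rfloor>"
  have "7 \<le> \<rho>" unfolding \<rho>_def
    by (rule le_powr_inverse_if_power_le)
      (use assms in \<open>simp_all, metis of_nat_le_iff of_nat_numeral of_nat_power power_Suc\<close>)
  then have L: "7 \<le> L" "\<rho> - 1 < L" by (simp_all add: L_def le_floor_iff)
  have e: "eps_N k N = 1 / (L - 1)" by (simp add: eps_N_def L_def \<rho>_def)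
  then show "0 < eps_N k N" "eps_N k N \<le> 1/6" using L by simp_all
  assume "0 < N"
  have "4 / (L - 2) < 9 / \<rho>"
  proof -
    have "4 * \<rho> < 9 * (L - 2)" using L \<open>7 \<le> \<rho>\<close> by (simp add: algebra_simps)
    with L \<open>7 \<le> \<rho>\<close> show ?thesis by (simp add: field_simps)
  qed
  have "real N powr (real (2*k) / real (2*k+1)) = real N / \<rho>"
  proof -
    have "real (2*k) / real (2*k+1) + 1 / real (2*k+1) = 1" by (simp add: field_simps)
    then have "real N powr (real (2*k) / real (2*k+1)) * \<rho> = real N"
      by (simp add: \<rho>_def powr_add[symmetric])
    then show ?thesis using \<open>7 \<le> \<rho>\<close> by (simp add: eq_divide_eq)
  qed
  have "4 * (eps_N k N / (1 - eps_N k N)) * real N = 4 / (L - 2) * real N"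
    using L by (simp add: e field_simps)
  also have "\<dots> < 9 / \<rho> * real N"
    using \<open>4 / (L - 2) < 9 / \<rho>\<close> \<open>0 < N\<close> by (intro mult_strict_right_mono) auto
  also have "\<dots> = 9 * real N powr (real (2*k) / real (2*k+1))"
    using \<open>real N powr (real (2*k) / real (2*k+1)) = real N / \<rho>\<close> by simp
  finally show "4 * (eps_N k N / (1 - eps_N k N)) * real N < 9 * real N powr (real (2*k) / real (2*k+1))" .
qed

lemma kappa_N_pos: "0 < eps_N k N \<Longrightarrow> 1 \<le> kappa_N k N"
  by (simp add: kappa_N_def)

lemma d_bounds:
  assumes "7 ^ (2*k+1) \<le> N" "0 < k" "n 0 = 0" "\<forall>j<k. n j < n (Suc j)"
    and "real (n k) / (real_of_int (kappa_N k N) ^ (k-1) + eps_N k N) < real_of_int d"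
    and "real_of_int d < real (n k) / (1 - eps_N k N)"
  shows "0 < d" "real_of_int d * (1 - eps_N k N) < real (n k)"
proof -
  have e: "0 < eps_N k N" "eps_N k N \<le> 1/6" using eps_N_bounds[OF assms(1)] by simp_all
  have "n 0 < n k" by (rule lift_Suc_mono_less_ivl[of "{..<k}"]) (use assms(2,4) in auto)
  moreover have "0 < real_of_int (kappa_N k N) ^ (k-1) + eps_N k N"
    using kappa_N_pos[OF e(1)] e by (intro add_pos_pos zero_less_power) simp_all
  ultimately show "0 < d" using assms(3,5)
    by (metis divide_pos_pos of_int_0_less_iff of_nat_0_less_iff order.strict_trans)
  show "real_of_int d * (1 - eps_N k N) < real (n k)" using assms(6) e by (simp add: field_simps)
qed

lemma exponent_split_if_approximation:
  fixes n :: "nat \<Rightarrow> nat" and m t :: "nat \<Rightarrow> int" and d T :: int and e :: real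
  assumes e: "0 < e" "e \<le> 1/6" and d: "0 < d" and "0 < k"
    and n: "n 0 = 0" "\<forall>j<k. n j < n (Suc j)" "real_of_int d * (1 - e) < real (n k)"
    and approx: "\<forall>j\<in>{1..k}. int (n j) = m j * d + t j \<and> \<bar>real_of_int (t j)\<bar> < e * real_of_int d"
    and "m 0 = 0" "t 0 = 0"
    and T: "T = Max ((\<lambda>j. \<bar>t j\<bar>) ` {..k})"
  shows "exponent_split k n m t d T" "real_of_int T < e * real_of_int d"
proof -
  have n_eq: "int (n j) = m j * d + t j" if "j \<le> k" for j
    using approx that \<open>n 0 = 0\<close> \<open>m 0 = 0\<close> \<open>t 0 = 0\<close> by (cases "j = 0") auto
  have t_small: "\<bar>real_of_int (t j)\<bar> < e * real_of_int d" if "j \<le> k" for j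
    using approx that \<open>t 0 = 0\<close> e d by (cases "j = 0") auto
  have t_sum: "\<bar>t i\<bar> + \<bar>t j\<bar> < d" if "i \<le> k" "j \<le> k" for i j
  proof -
    have "real_of_int (\<bar>t i\<bar> + \<bar>t j\<bar>) < 2 * e * real_of_int d"
      using t_small[OF that(1)] t_small[OF that(2)] by simp
    also have "\<dots> \<le> real_of_int d" using e d by simp
    finally show ?thesis by linarith
  qed
  have n_le: "n j \<le> n k" if "j \<le> k" for j
    by (rule lift_Suc_mono_le_ivl[of "{..<k}" n]) (use n(2) that in auto)
  have m_le: "m i \<le> m j" if "i \<le> k" "j \<le> k" "n i \<le> n j" for i j
  proof (rule quotient_le_if_le[OF d _ t_sum[OF that(1,2)]])
    have "int (n i) \<le> int (n j)" using that(3) by simp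
    then show "m i * d + t i \<le> m j * d + t j" by (simp only: n_eq that)
  qed
  have "0 < m k"
  proof -
    have "real (n k) = real_of_int (m k) * real_of_int d + real_of_int (t k)"
      using arg_cong[OF n_eq[of k], of real_of_int] by simp
    moreover have "0 \<le> real_of_int d * (1 - 2 * e)" using e d by simp
    ultimately have "0 < real_of_int (m k) * real_of_int d"
      using n(3) t_small[of k] by (simp add: algebra_simps abs_less_iff)
    with d show ?thesis by (simp add: zero_less_mult_iff)
  qed
  show "exponent_split k n m t d T"
  proof
    fix j assume j: "j \<le> k"
    show "int (n j) = m j * d + t j" using j by (rule n_eq)
    show "\<bar>t j\<bar> \<le> T" using j by (simp add: T)
    show "0 \<le> m j" using m_le[of 0 j] j \<open>n 0 = 0\<close> \<open>m 0 = 0\<close> by simp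
    show "n j \<le> n k" using j by (rule n_le)
    show "m j \<le> m k" using m_le[OF j order.refl n_le[OF j]] .
  qed (fact d \<open>m 0 = 0\<close> \<open>0 < m k\<close>)+
  have "T \<in> (\<lambda>j. \<bar>t j\<bar>) ` {..k}" unfolding T by (intro Max_in) auto
  then show "real_of_int T < e * real_of_int d" using t_small by auto
qed

lemma (in exponent_split) four_mk_T_le:
  assumes "0 < e" "e < 1" "real_of_int T \<le> e * real_of_int d"
    "real_of_int d * (1 - e) \<le> real N" "n k \<le> N"
  shows "real (4 * nat (m k) * nat T) \<le> 4 * (e / (1 - e)) * real N"
proof -
  have "m k * d \<le> int N + T" using n_eq[of k] t_bound[of k] assms(5) by (simp add: abs_le_iff)
  then have "real_of_int (m k) * real_of_int d \<le> real N + real_of_int T"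
    by (metis of_int_add of_int_le_iff of_int_mult of_int_of_nat_eq)
  then have "real_of_int (m k) * real_of_int T \<le> e / (1 - e) * real N"
    using assms m_k_pos t_bound[of 0] by (intro product_le_if_approximation) auto
  moreover have "0 \<le> T" using t_bound[of 0] by simp
  ultimately show ?thesis using m_k_pos by simp
qed

theorem lemma6:
  fixes k :: nat
  assumes "k \<ge> 3"
  shows "\<exists>N0::nat. \<forall>N\<ge>N0. \<forall>(n::nat \<Rightarrow> nat) (m::nat \<Rightarrow> int) (t::nat \<Rightarrow> int) (d::int) (g::int poly).
    N > 0 \<longrightarrow>
    n 0 = 0 \<longrightarrow> (\<forall>j<k. n j < n (Suc j)) \<longrightarrow> n k \<le> N \<longrightarrow> real (n k) \<ge> V_N k N \<longrightarrow>
    real (n k) / (real_of_int (kappa_N k N) ^ (k-1) + eps_N k N) < real_of_int d \<longrightarrow>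
    real_of_int d < real (n k) / (1 - eps_N k N) \<longrightarrow>
    (\<forall>j\<in>{1..k}. int (n j) = m j * d + t j \<and> \<bar>real_of_int (t j)\<bar> < eps_N k N * real_of_int d) \<longrightarrow>
    m 0 = 0 \<longrightarrow> t 0 = 0 \<longrightarrow>
    irreducible g \<longrightarrow> reciprocal g \<longrightarrow> g dvd F_poly k n \<longrightarrow>
    (real (degree g) < 9 * real N powr (real (2*k) / real (2*k+1)) \<or>
     (\<exists>i\<le>k. \<exists>j\<le>k. \<exists>u\<le>k. \<exists>v\<le>k. distinct [i,j,u,v] \<and>
        (int (n i) - int (n j)) * (m u - m v) - (int (n u) - int (n v)) * (m i - m j) = 0))"
proof (intro exI[of _ "7^(2*k+1)"] allI impI)
  fix N :: nat and n :: "nat \<Rightarrow> nat" and m t :: "nat \<Rightarrow> int" and d :: int and g :: "int poly"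
  assume N: "7^(2*k+1) \<le> N" and "0 < N" and n: "n 0 = 0" "\<forall>j<k. n j < n (Suc j)" "n k \<le> N"
    and "real (n k) \<ge> V_N k N"
    and d: "real (n k) / (real_of_int (kappa_N k N) ^ (k-1) + eps_N k N) < real_of_int d"
      "real_of_int d < real (n k) / (1 - eps_N k N)"
    and approx: "\<forall>j\<in>{1..k}. int (n j) = m j * d + t j \<and> \<bar>real_of_int (t j)\<bar> < eps_N k N * real_of_int d"
    and "m 0 = 0" "t 0 = 0" and "irreducible g" "reciprocal g" "g dvd F_poly k n"
  define e where "e = eps_N k N"
  define T where "T = Max ((\<lambda>j. \<bar>t j\<bar>) ` {..k})"
  have e: "0 < e" "e \<le> 1/6" using eps_N_bounds[OF N] by (simp_all add: e_def)
  have "0 < k" using assms by simp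
  note d_bounds = d_bounds[OF N this n(1,2) d, folded e_def]
  have split: "exponent_split k n m t d T" and T_small: "real_of_int T < e * real_of_int d"
    by (rule exponent_split_if_approximation[OF e d_bounds(1) \<open>0 < k\<close> n(1,2) d_bounds(2)
        approx[folded e_def] \<open>m 0 = 0\<close> \<open>t 0 = 0\<close> T_def])+
  interpret exponent_split k n m t d T by (fact split)
  have "real (4 * nat (m k) * nat T) < 9 * real N powr (real (2*k) / real (2*k+1))"
    using four_mk_T_le[of e N] e T_small d_bounds(2) n(3) eps_N_bounds(3)[OF N \<open>0 < N\<close>]
    unfolding e_def by linarith
  then show "real (degree g) < 9 * real N powr (real (2*k) / real (2*k+1)) \<or>
     (\<exists>i\<le>k. \<exists>j\<le>k. \<exists>u\<le>k. \<exists>v\<le>k. distinct [i,j,u,v] \<and>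
        (int (n i) - int (n j)) * (m u - m v) - (int (n u) - int (n v)) * (m i - m j) = 0)"
    using factor_degree_le_or_det_eq_0[OF assms \<open>reciprocal g\<close> \<open>g dvd F_poly k n\<close>]
    by (meson le_less_trans of_nat_le_iff)
qed

end
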